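(* Consider a single group of $N^t$ treated and $N^c$ control units with binary outcomes, where $U$ treated units have outcome 1, $V=N^t-U$ treated units have outcome 0, $\eta$ control units have outcome 1 and $\nu=N^c-\eta$ control units have outcome 0, and any treated unit may be paired with any control unit. Consider all matchings consisting of exactly $M=\min(N^t,N^c)$ disjoint treated–control pairs, and maximize $\chi=(B-C-1)/\sqrt{B+C+1}$ over them. (i) If $N^c>N^t$, there is a maximizing matching in which the unmatched control units consist of exactly $\min(N^c-N^t,\eta)$ units with outcome 1 and $\max(N^c-N^t-\eta,0)$ units with outcome 0. (ii) If $N^t\ge N^c$, there is a maximizing matching in which the unmatched treated units consist of exactly $\min(N^t-N^c,V)$ units with outcome 0 and $\max(U-N^c,0)$ units with outcome 1.
   Context: For a matching (a set of disjoint treated–control pairs), $B$ is the number of pairs in which the treated unit has outcome 1 and the control unit has outcome 0, and $C$ is the number of pairs in which the treated unit has outcome 0 and the control unit has outcome 1. *)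

theory Defs
  imports Complex_Main
begin

text \<open>Treated units form a finite set T (outcome yt), control units a finite set Cs
(outcome yc); outcome 1 is True. Any treated unit may be paired with any control unit.\<close>

definition is_matching :: "'a set \<Rightarrow> 'b set \<Rightarrow> ('a \<times> 'b) set \<Rightarrow> bool" where
  "is_matching T Cs P \<longleftrightarrow> P \<subseteq> T \<times> Cs \<and> inj_on fst P \<and> inj_on snd P"

definition full_matching :: "'a set \<Rightarrow> 'b set \<Rightarrow> ('a \<times> 'b) set \<Rightarrow> bool" where
  "full_matching T Cs P \<longleftrightarrow> is_matching T Cs P \<and> card P = min (card T) (card Cs)"

definition countB :: "('a \<Rightarrow> bool) \<Rightarrow> ('b \<Rightarrow> bool) \<Rightarrow> ('a \<times> 'b) set \<Rightarrow> nat" where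
  "countB yt yc P = card {p \<in> P. yt (fst p) \<and> \<not> yc (snd p)}"

definition countC :: "('a \<Rightarrow> bool) \<Rightarrow> ('b \<Rightarrow> bool) \<Rightarrow> ('a \<times> 'b) set \<Rightarrow> nat" where
  "countC yt yc P = card {p \<in> P. \<not> yt (fst p) \<and> yc (snd p)}"

definition chi :: "('a \<Rightarrow> bool) \<Rightarrow> ('b \<Rightarrow> bool) \<Rightarrow> ('a \<times> 'b) set \<Rightarrow> real" where
  "chi yt yc P = (real (countB yt yc P) - real (countC yt yc P) - 1)
                  / sqrt (real (countB yt yc P) + real (countC yt yc P) + 1)"

definition maximizer :: "'a set \<Rightarrow> 'b set \<Rightarrow> ('a \<Rightarrow> bool) \<Rightarrow> ('b \<Rightarrow> bool) \<Rightarrow> ('a \<times> 'b) set \<Rightarrow> bool" where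
  "maximizer T Cs yt yc P \<longleftrightarrow> full_matching T Cs P \<and>
     (\<forall>Q. full_matching T Cs Q \<longrightarrow> chi yt yc Q \<le> chi yt yc P)"

end

theory Submission
  imports Defs
begin

text \<open>The statistic (B - C - 1) / sqrt (B + C + 1) is nondecreasing in B and nonincreasing in C.
  Hence, if an unmatched treated unit with outcome 1 coexists with a matched treated unit with
  outcome 0, handing the latter's control to the former raises B or lowers C and does not decrease
  chi. A maximizer with the largest number of matched treated ones therefore leaves unmatched only
  zeros, or matches only ones; the unmatched counts are then forced. Case (i) reduces to (ii) by
  exchanging the roles of the two groups and negating all outcomes, which leaves B and C unchanged.\<close>

lemma div_sqrt_le_succ_div_sqrt:
  fixes a s :: real
  assumes "0 < s" and "a \<le> s"
  shows "a / sqrt s \<le> (a + 1) / sqrt (s + 1)"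
proof (cases "a \<le> 0")
  case True
  have "a / sqrt s \<le> a / sqrt (s + 1)"
    by (rule divide_left_mono_neg) (use assms True in auto)
  also have "\<dots> \<le> (a + 1) / sqrt (s + 1)"
    by (rule divide_right_mono) (use assms in auto)
  finally show ?thesis .
next
  case False
  have "a * a \<le> a * s"
    using assms(2) False by (simp add: mult_left_mono)
  moreover have "0 \<le> a * s"
    using assms False by simp
  moreover have "(a + 1)\<^sup>2 * s - a\<^sup>2 * (s + 1) = (a * s - a * a) + a * s + s"
    by (simp add: power2_eq_square algebra_simps)
  ultimately have "a\<^sup>2 * (s + 1) \<le> (a + 1)\<^sup>2 * s"
    using assms by linarith
  then have "sqrt (a\<^sup>2 * (s + 1)) \<le> sqrt ((a + 1)\<^sup>2 * s)"
    by (rule real_sqrt_le_mono)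
  then have "a * sqrt (s + 1) \<le> (a + 1) * sqrt s"
    using assms False by (simp add: real_sqrt_mult)
  then show ?thesis
    using assms by (simp add: divide_simps)
qed

lemma pred_div_sqrt_le_div_sqrt:
  fixes a s :: real
  assumes "0 < s" and "- a \<le> s"
  shows "(a - 1) / sqrt (s + 1) \<le> a / sqrt s"
proof -
  have "(a - 1) / sqrt (s + 1) = - ((- a + 1) / sqrt (s + 1))"
    by (simp add: diff_divide_distrib)
  then show ?thesis
    using div_sqrt_le_succ_div_sqrt[OF assms] by simp
qed

definition chi_value :: "nat \<Rightarrow> nat \<Rightarrow> real" where
  "chi_value B C = (real B - real C - 1) / sqrt (real B + real C + 1)"

lemma chi_value_le_Suc_left: "chi_value B C \<le> chi_value (Suc B) C"
  using div_sqrt_le_succ_div_sqrt[of "real B + real C + 1" "real B - real C - 1"]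
  by (simp add: chi_value_def algebra_simps)

lemma chi_value_Suc_right_le: "chi_value B (Suc C) \<le> chi_value B C"
  using pred_div_sqrt_le_div_sqrt[of "real B + real C + 1" "real B - real C - 1"]
  by (simp add: chi_value_def algebra_simps)

lemma chi_eq_chi_value: "chi yt yc P = chi_value (countB yt yc P) (countC yt yc P)"
  by (simp add: chi_def chi_value_def)

lemma card_image_swap: "card (prod.swap ` A) = card A"
  by (rule card_image) (metis inj_on_def swap_swap)

lemma full_matching_swap:
  assumes "full_matching T Cs P"
  shows "full_matching Cs T (prod.swap ` P)"
  using assms unfolding full_matching_def is_matching_def inj_on_def
  by (auto simp: card_image_swap min.commute)

lemma chi_swap: "chi (\<lambda>j. \<not> yc j) (\<lambda>i. \<not> yt i) (prod.swap ` P) = chi yt yc P"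
proof -
  have "{q \<in> prod.swap ` P. \<not> yc (fst q) \<and> \<not> \<not> yt (snd q)}
        = prod.swap ` {p \<in> P. yt (fst p) \<and> \<not> yc (snd p)}"
   and "{q \<in> prod.swap ` P. \<not> \<not> yc (fst q) \<and> \<not> yt (snd q)}
        = prod.swap ` {p \<in> P. \<not> yt (fst p) \<and> yc (snd p)}"
    by auto
  then show ?thesis
    unfolding chi_def countB_def countC_def by (simp only: card_image_swap)
qed

lemma maximizer_swap:
  assumes "maximizer Cs T (\<lambda>j. \<not> yc j) (\<lambda>i. \<not> yt i) P"
  shows "maximizer T Cs yt yc (prod.swap ` P)"
  unfolding maximizer_def
proof (intro conjI allI impI)
  show "full_matching T Cs (prod.swap ` P)"
    using assms full_matching_swap unfolding maximizer_def by blast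
  fix Q assume "full_matching T Cs Q"
  then have "chi (\<lambda>j. \<not> yc j) (\<lambda>i. \<not> yt i) (prod.swap ` Q)
             \<le> chi (\<lambda>j. \<not> yc j) (\<lambda>i. \<not> yt i) P"
    using assms full_matching_swap unfolding maximizer_def by blast
  then show "chi yt yc Q \<le> chi yt yc (prod.swap ` P)"
    using chi_swap[of yc yt Q] chi_swap[of yc yt "prod.swap ` P"]
    by (simp add: image_image)
qed

lemma full_matching_exists:
  assumes "finite T" and "finite Cs"
  shows "\<exists>P. full_matching T Cs P"
proof -
  have "\<exists>P. full_matching T Cs P"
    if fin: "finite T" "finite Cs" and le: "card Cs \<le> card T"
    for T :: "'c set" and Cs :: "'d set"
  proof -
    obtain f where f: "f ` Cs \<subseteq> T" "inj_on f Cs"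
      using card_le_inj[OF fin(2,1) le] by blast
    have "is_matching T Cs ((\<lambda>c. (f c, c)) ` Cs)"
      using f unfolding is_matching_def inj_on_def by auto
    moreover have "card ((\<lambda>c. (f c, c)) ` Cs) = card Cs"
      by (rule card_image) (auto simp: inj_on_def)
    ultimately show ?thesis
      using le by (auto simp: full_matching_def)
  qed
  then show ?thesis
    using assms full_matching_swap by (metis nat_le_linear)
qed

lemma maximizer_exists:
  assumes "finite T" and "finite Cs"
  shows "\<exists>P. maximizer T Cs yt yc P"
proof -
  let ?F = "{P. full_matching T Cs P}"
  have "finite ?F"
    by (rule finite_subset[of _ "Pow (T \<times> Cs)"])
       (auto simp: full_matching_def is_matching_def assms)
  then have fin: "finite (chi yt yc ` ?F)"
    by simp
  have "chi yt yc ` ?F \<noteq> {}"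
    using full_matching_exists[OF assms] by auto
  then obtain P where "P \<in> ?F" "chi yt yc P = Max (chi yt yc ` ?F)"
    using Max_in[OF fin] by auto
  with fin show ?thesis
    unfolding maximizer_def by auto
qed

lemma full_matching_exchange:
  assumes full: "full_matching T Cs P"
    and i: "i \<in> T" "i \<notin> fst ` P" and tc: "(t, c) \<in> P"
  shows "full_matching T Cs (insert (i, c) (P - {(t, c)}))"
proof -
  have sub: "P \<subseteq> T \<times> Cs" and fst: "inj_on fst P" and snd: "inj_on snd P"
    using full by (auto simp: full_matching_def is_matching_def)
  have "c \<notin> snd ` (P - {(t, c)})"
    using snd tc unfolding inj_on_def by fastforce
  then have "is_matching T Cs (insert (i, c) (P - {(t, c)}))"
    unfolding is_matching_def using sub i tc
    by (auto intro!: inj_on_diff[OF fst] inj_on_diff[OF snd] simp: inj_on_insert)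
  moreover have "(i, c) \<notin> P"
    using i by force
  then have "card (insert (i, c) (P - {(t, c)})) = card P"
    using tc card_Suc_Diff1[of P "(t, c)"] by (cases "finite P") auto
  ultimately show ?thesis
    using full by (simp add: full_matching_def)
qed

lemma chi_exchange_mono:
  assumes "finite P" and i: "i \<notin> fst ` P" "yt i" and tc: "(t, c) \<in> P" "\<not> yt t"
  shows "chi yt yc P \<le> chi yt yc (insert (i, c) (P - {(t, c)}))"
    (is "_ \<le> chi yt yc ?Q")
proof -
  let ?B = "\<lambda>P. {p \<in> P. yt (fst p) \<and> \<not> yc (snd p)}"
  let ?C = "\<lambda>P. {p \<in> P. \<not> yt (fst p) \<and> yc (snd p)}"
  have "(i, c) \<notin> P"
    using i by force
  have C_Q: "?C ?Q = ?C P - {(t, c)}"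
    using i tc by auto
  show ?thesis
  proof (cases "yc c")
    case True
    then have "?B ?Q = ?B P"
      using i tc by auto
    moreover have "(t, c) \<in> ?C P"
      using True tc by auto
    then have "countC yt yc P = Suc (countC yt yc ?Q)"
      using \<open>finite P\<close> card_Suc_Diff1[of "?C P" "(t, c)"] unfolding countC_def C_Q by simp
    ultimately show ?thesis
      using chi_value_Suc_right_le unfolding chi_eq_chi_value countB_def by simp
  next
    case False
    then have "?B ?Q = insert (i, c) (?B P)"
      using i tc by auto
    then have "countB yt yc ?Q = Suc (countB yt yc P)"
      using \<open>finite P\<close> \<open>(i, c) \<notin> P\<close> unfolding countB_def by simp
    moreover have "countC yt yc ?Q = countC yt yc P"
      using C_Q False unfolding countC_def by simp
    ultimately show ?thesis
      using chi_value_le_Suc_left unfolding chi_eq_chi_value by simp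
  qed
qed

lemma card_filter_add_card_filter_not:
  assumes "finite A"
  shows "card {x \<in> A. Q x} + card {x \<in> A. \<not> Q x} = card A"
proof -
  have "card A = card ({x \<in> A. Q x} \<union> {x \<in> A. \<not> Q x})"
    by (rule arg_cong[where f = card]) auto
  also have "\<dots> = card {x \<in> A. Q x} + card {x \<in> A. \<not> Q x}"
    by (rule card_Un_disjoint) (use assms in auto)
  finally show ?thesis
    by simp
qed

lemma card_filter_Diff:
  assumes "finite A" and "B \<subseteq> A"
  shows "card {x \<in> A - B. Q x} = card {x \<in> A. Q x} - card {x \<in> B. Q x}"
proof -
  have "{x \<in> A - B. Q x} = {x \<in> A. Q x} - {x \<in> B. Q x}"
    by auto
  moreover have "{x \<in> B. Q x} \<subseteq> {x \<in> A. Q x}"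
    using assms by auto
  ultimately show ?thesis
    using assms by (simp add: card_Diff_subset finite_subset)
qed

lemma card_unmatched_if_sorted:
  assumes "finite T" and "M \<subseteq> T"
    and sorted: "(\<forall>i \<in> T - M. \<not> Q i) \<or> (\<forall>i \<in> M. Q i)"
  shows "card {i \<in> T - M. \<not> Q i} = min (card T - card M) (card {i \<in> T. \<not> Q i})"
    and "int (card {i \<in> T - M. Q i}) = max (int (card {i \<in> T. Q i}) - int (card M)) 0"
proof -
  have "finite M"
    using assms finite_subset by blast
  note split_T = card_filter_add_card_filter_not[OF \<open>finite T\<close>, of Q]
  note split_M = card_filter_add_card_filter_not[OF \<open>finite M\<close>, of Q]
  have "card {i \<in> M. Q i} \<le> card {i \<in> T. Q i}" "card {i \<in> M. \<not> Q i} \<le> card {i \<in> T. \<not> Q i}"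
    using assms by (auto intro!: card_mono)
  moreover note diff = card_filter_Diff[OF assms(1,2), of Q] card_filter_Diff[OF assms(1,2), of "\<lambda>i. \<not> Q i"]
  moreover have "{i \<in> T - M. Q i} = {} \<or> {i \<in> M. \<not> Q i} = {}"
    using sorted by auto
  then have "card {i \<in> T - M. Q i} = 0 \<or> card {i \<in> M. \<not> Q i} = 0"
    by (metis card.empty)
  ultimately show "card {i \<in> T - M. \<not> Q i} = min (card T - card M) (card {i \<in> T. \<not> Q i})"
    and "int (card {i \<in> T - M. Q i}) = max (int (card {i \<in> T. Q i}) - int (card M)) 0"
    using split_T split_M by auto
qed

lemma maximizer_exists_sorted:
  assumes "finite T" and "finite Cs"
  shows "\<exists>P. maximizer T Cs yt yc P \<and> ((\<forall>i \<in> T - fst ` P. \<not> yt i) \<or> (\<forall>i \<in> fst ` P. yt i))"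
proof -
  let ?ones = "\<lambda>P. card {p \<in> P. yt (fst p)}"
  have finite_full: "finite P" if "full_matching T Cs P" for P
    using that assms finite_subset unfolding full_matching_def is_matching_def by blast
  have "?ones P < Suc (card (T \<times> Cs))" if "maximizer T Cs yt yc P" for P
  proof -
    have "{p \<in> P. yt (fst p)} \<subseteq> T \<times> Cs"
      using that unfolding maximizer_def full_matching_def is_matching_def by auto
    then have "?ones P \<le> card (T \<times> Cs)"
      using assms by (intro card_mono) auto
    then show ?thesis
      by linarith
  qed
  moreover obtain P0 where "maximizer T Cs yt yc P0"
    using maximizer_exists[OF assms] by blast
  ultimately obtain P where max: "maximizer T Cs yt yc P"
    and most_ones: "\<And>Q. maximizer T Cs yt yc Q \<Longrightarrow> ?ones Q \<le> ?ones P"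
    using Lattices_Big.ex_has_greatest_nat[of "maximizer T Cs yt yc" P0 ?ones] by blast
  have full: "full_matching T Cs P" and "finite P"
    using max finite_full unfolding maximizer_def by auto
  have "(\<forall>i \<in> T - fst ` P. \<not> yt i) \<or> (\<forall>i \<in> fst ` P. yt i)"
  proof (rule ccontr)
    assume "\<not> ?thesis"
    then obtain i p where i: "i \<in> T" "i \<notin> fst ` P" "yt i" and p: "p \<in> P" "\<not> yt (fst p)"
      by blast
    obtain t c where tc: "(t, c) \<in> P" "\<not> yt t"
      using p by (cases p) auto
    define Q where "Q = insert (i, c) (P - {(t, c)})"
    have "chi yt yc P \<le> chi yt yc Q"
      unfolding Q_def by (rule chi_exchange_mono[OF \<open>finite P\<close> i(2,3) tc])
    then have "maximizer T Cs yt yc Q"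
      using max full_matching_exchange[OF full i(1,2) tc(1)]
      unfolding maximizer_def Q_def by fastforce
    moreover have "(i, c) \<notin> P"
      using i by force
    then have "{p \<in> Q. yt (fst p)} = insert (i, c) {p \<in> P. yt (fst p)}"
      using i tc unfolding Q_def by auto
    then have "?ones Q = Suc (?ones P)"
      using \<open>finite P\<close> \<open>(i, c) \<notin> P\<close> by simp
    ultimately show False
      using most_ones[of Q] by simp
  qed
  with max show ?thesis
    by blast
qed

lemma exists_maximizer_unmatched_treated:
  assumes "finite T" and "finite Cs" and "card Cs \<le> card T"
  shows "\<exists>P. maximizer T Cs yt yc P \<and>
    card {i \<in> T - fst ` P. \<not> yt i} = min (card T - card Cs) (card {i \<in> T. \<not> yt i}) \<and>
    int (card {i \<in> T - fst ` P. yt i}) = max (int (card {i \<in> T. yt i}) - int (card Cs)) 0"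
proof -
  obtain P where max: "maximizer T Cs yt yc P"
    and sorted: "(\<forall>i \<in> T - fst ` P. \<not> yt i) \<or> (\<forall>i \<in> fst ` P. yt i)"
    using maximizer_exists_sorted[OF assms(1,2)] by blast
  have "fst ` P \<subseteq> T" and "card (fst ` P) = card Cs"
    using max assms(3) unfolding maximizer_def full_matching_def is_matching_def
    by (auto simp: card_image)
  then show ?thesis
    using max card_unmatched_if_sorted[OF assms(1) _ sorted] by metis
qed

theorem claim1:
  fixes T :: "'a set" and Cs :: "'b set" and yt :: "'a \<Rightarrow> bool" and yc :: "'b \<Rightarrow> bool"
  assumes "finite T" and "finite Cs"
  defines "Nt \<equiv> card T" and "Nc \<equiv> card Cs"
    and "U \<equiv> card {i \<in> T. yt i}" and "V \<equiv> card {i \<in> T. \<not> yt i}"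
    and "\<eta> \<equiv> card {j \<in> Cs. yc j}"
  shows "(Nc > Nt \<longrightarrow> (\<exists>P. maximizer T Cs yt yc P \<and>
            card {j \<in> Cs - snd ` P. yc j} = min (Nc - Nt) \<eta> \<and>
            int (card {j \<in> Cs - snd ` P. \<not> yc j}) = max (int Nc - int Nt - int \<eta>) 0))
       \<and> (Nt \<ge> Nc \<longrightarrow> (\<exists>P. maximizer T Cs yt yc P \<and>
            card {i \<in> T - fst ` P. \<not> yt i} = min (Nt - Nc) V \<and>
            int (card {i \<in> T - fst ` P. yt i}) = max (int U - int Nc) 0))"
proof (intro conjI impI)
  assume "Nt \<ge> Nc"
  then show "\<exists>P. maximizer T Cs yt yc P \<and>
            card {i \<in> T - fst ` P. \<not> yt i} = min (Nt - Nc) V \<and>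
            int (card {i \<in> T - fst ` P. yt i}) = max (int U - int Nc) 0"
    using exists_maximizer_unmatched_treated[OF assms(1,2)] unfolding Nt_def Nc_def U_def V_def by simp
next
  assume "Nc > Nt"
  then obtain P where max: "maximizer Cs T (\<lambda>j. \<not> yc j) (\<lambda>i. \<not> yt i) P"
    and ones: "card {j \<in> Cs - fst ` P. yc j} = min (Nc - Nt) \<eta>"
    and zeros: "int (card {j \<in> Cs - fst ` P. \<not> yc j}) = max (int (card {j \<in> Cs. \<not> yc j}) - int Nt) 0"
    using exists_maximizer_unmatched_treated[OF assms(2,1), of "\<lambda>j. \<not> yc j" "\<lambda>i. \<not> yt i"]
    unfolding Nt_def Nc_def \<eta>_def by auto
  have "card {j \<in> Cs. \<not> yc j} = Nc - \<eta>" and "\<eta> \<le> Nc"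
    using card_filter_add_card_filter_not[OF assms(2), of yc] unfolding Nc_def \<eta>_def by auto
  then show "\<exists>P. maximizer T Cs yt yc P \<and>
            card {j \<in> Cs - snd ` P. yc j} = min (Nc - Nt) \<eta> \<and>
            int (card {j \<in> Cs - snd ` P. \<not> yc j}) = max (int Nc - int Nt - int \<eta>) 0"
    using maximizer_swap[OF max] ones zeros by (intro exI[of _ "prod.swap ` P"]) (auto simp: image_image)
qed

end
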